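(* Let $K$ be a positive even integer, $J\ge 0$ a real number and $\epsilon>0$. Let $|\Psi\rangle\in(\mathbb C^2)^{\otimes K}$ be a unit vector chosen uniformly at random (according to the unitarily invariant probability measure on pure states), and let $F^{(K,J)}_\Psi:=\langle\Psi|\,\mathcal E^{(K)}_J(|\Psi\rangle\langle\Psi|)\,|\Psi\rangle$. Then $$\mathrm{Prob}\big[F^{(K,J)}_\Psi<1-\epsilon\big]<\frac{2(K+1)}{\epsilon}\exp\!\Big[-\frac{2J^2}{K}\Big].$$
   Context: For $K$ qubits, decompose $(\mathbb C^2)^{\otimes K}\cong\bigoplus_{j=0}^{K/2}\mathcal R_j\otimes\mathcal M_{jK}$ (Schur–Weyl decomposition), where $j$ is the total angular momentum quantum number, $\mathcal R_j$ carries the spin-$j$ irreducible representation of $SU(2)$ (dimension $2j+1$) and $\mathcal M_{jK}$ is the multiplicity space, of dimension $m_{jK}=\frac{2j+1}{K/2+j+1}\binom{K}{K/2+j}$; equivalently $\mathcal R_j\otimes\mathcal M_{jK}$ is the eigenspace of the total squared angular momentum $\big(\sum_{k=1}^K \sigma^{(k)}/2\big)^2$ with eigenvalue $j(j+1)$. Let $P^{(K)}_J$ be the orthogonal projector onto $\mathcal H^{(K)}_J:=\bigoplus_{j\le J}\mathcal R_j\otimes\mathcal M_{jK}$, and fix a density matrix $\rho_0$ supported in $\mathcal H^{(K)}_J$. The encoding channel is $\mathcal E^{(K)}_J(\rho):=P^{(K)}_J\rho P^{(K)}_J+\mathrm{Tr}[(I^{\otimes K}-P^{(K)}_J)\rho]\,\rho_0$.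 *)

theory Defs
  imports "HOL-Probability.Probability"
begin

(* Qubits are labelled by a finite type 'n, K = CARD('n).
   Computational basis states of (C^2)^{\<otimes>K} are bit assignments 'n \<Rightarrow> bool
   (False = |0>, True = |1>, sigma_z|0> = |0>). *)

type_synonym 'n qstate = "complex ^ ('n \<Rightarrow> bool)"
type_synonym 'n qop = "complex ^ ('n \<Rightarrow> bool) ^ ('n \<Rightarrow> bool)"

definition cinner :: "complex ^ 'i \<Rightarrow> complex ^ 'i \<Rightarrow> complex" where
  "cinner v w = (\<Sum>i\<in>UNIV. cnj (v $ i) * w $ i)"

definition adjoint_mat :: "complex ^ 'i ^ 'i \<Rightarrow> complex ^ 'i ^ 'i" where
  "adjoint_mat A = (\<chi> i j. cnj (A $ j $ i))"

definition smult_mat :: "complex \<Rightarrow> complex ^ 'i ^ 'i \<Rightarrow> complex ^ 'i ^ 'i" where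
  "smult_mat c A = (\<chi> i j. c * A $ i $ j)"

definition mtrace :: "complex ^ 'i ^ 'i \<Rightarrow> complex" where
  "mtrace A = (\<Sum>i\<in>UNIV. A $ i $ i)"

definition outer :: "complex ^ 'i \<Rightarrow> complex ^ 'i ^ 'i" where
  "outer v = (\<chi> i j. v $ i * cnj (v $ j))"

definition unitary_mat :: "complex ^ 'i ^ 'i \<Rightarrow> bool" where
  "unitary_mat U \<longleftrightarrow> adjoint_mat U ** U = mat 1"

definition density_matrix :: "complex ^ 'i ^ 'i \<Rightarrow> bool" where
  "density_matrix \<rho> \<longleftrightarrow> adjoint_mat \<rho> = \<rho> \<and> (\<forall>v. 0 \<le> Re (cinner v (\<rho> *v v))) \<and> mtrace \<rho> = 1"

definition sigma_x :: "'n::finite \<Rightarrow> 'n qop" where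
  "sigma_x k = (\<chi> a b. if b = a(k := \<not> a k) then 1 else 0)"

definition sigma_y :: "'n::finite \<Rightarrow> 'n qop" where
  "sigma_y k = (\<chi> a b. if b = a(k := \<not> a k) then (if a k then \<i> else - \<i>) else 0)"

definition sigma_z :: "'n::finite \<Rightarrow> 'n qop" where
  "sigma_z k = (\<chi> a b. if b = a then (if a k then -1 else 1) else 0)"

definition spin_x :: "'n::finite qop" where
  "spin_x = smult_mat (1/2) (\<Sum>k\<in>UNIV. sigma_x k)"
definition spin_y :: "'n::finite qop" where
  "spin_y = smult_mat (1/2) (\<Sum>k\<in>UNIV. sigma_y k)"
definition spin_z :: "'n::finite qop" where
  "spin_z = smult_mat (1/2) (\<Sum>k\<in>UNIV. sigma_z k)"

definition total_spin_sq :: "'n::finite qop" where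
  "total_spin_sq = spin_x ** spin_x + spin_y ** spin_y + spin_z ** spin_z"

definition low_spin_space :: "real \<Rightarrow> 'n::finite qstate set" where
  "low_spin_space J = span (\<Union>j\<in>{j. 0 \<le> j \<and> j \<le> J}.
      {v. total_spin_sq *v v = complex_of_real (j * (j + 1)) *s v})"

definition orth_proj_onto :: "(complex ^ 'i) set \<Rightarrow> complex ^ 'i ^ 'i" where
  "orth_proj_onto S = (THE P. P ** P = P \<and> adjoint_mat P = P \<and> range (\<lambda>v. P *v v) = S)"

definition proj_J :: "real \<Rightarrow> 'n::finite qop" where
  "proj_J J = orth_proj_onto (low_spin_space J)"

definition encoding_channel :: "real \<Rightarrow> 'n::finite qop \<Rightarrow> 'n qop \<Rightarrow> 'n qop" where
  "encoding_channel J \<rho>0 \<rho> =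
     proj_J J ** \<rho> ** proj_J J + smult_mat (mtrace ((mat 1 - proj_J J) ** \<rho>)) \<rho>0"

definition fidelity :: "real \<Rightarrow> 'n::finite qop \<Rightarrow> 'n qstate \<Rightarrow> real" where
  "fidelity J \<rho>0 \<psi> = Re (cinner \<psi> (encoding_channel J \<rho>0 (outer \<psi>) *v \<psi>))"

definition unitarily_invariant_pure_state_measure :: "(complex ^ 'i::finite) measure \<Rightarrow> bool" where
  "unitarily_invariant_pure_state_measure M \<longleftrightarrow>
     prob_space M \<and> sets M = sets borel \<and> emeasure M (sphere 0 1) = 1 \<and>
     (\<forall>U. unitary_mat U \<longrightarrow> distr M borel (\<lambda>v. U *v v) = M)"

end

theory Submission
  imports Defs
begin

text \<open>Since \<open>\<rho>\<^sub>0 \<ge> 0\<close>, the fidelity is at least \<open>\<langle>\<psi>|P|\<psi>\<rangle>\<^sup>2 \<ge> 1 - 2\<langle>\<psi>|1-P|\<psi>\<rangle>\<close>.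
  Markov's inequality and unitary invariance (\<open>E |\<psi>\<rangle>\<langle>\<psi>| = 1/2\<^sup>K\<close>) bound the probability by
  \<open>2 tr(1-P) / (2\<^sup>K \<epsilon>)\<close>. As \<open>P\<close> commutes with \<open>S\<^sub>z\<close>, the trace splits over the sectors with
  \<open>t\<close> qubits in \<open>|1\<rangle>\<close>. When \<open>|K/2 - t| \<le> J\<close>, the raising operator is injective on the part
  of the sector orthogonal to \<open>H\<^sub>J\<close>, since a vector it kills is a highest-weight vector of spin
  at most \<open>J\<close>. So each of the \<open>2\<lfloor>J\<rfloor>+1\<close> central sectors contributes at most the binomial
  coefficient just outside them, every other sector its own binomial coefficient, and
  Hoeffding's inequality for \<open>Binomial(K, 1/2)\<close> bounds these tails by \<open>2\<^sup>K exp(-2J\<^sup>2/K)\<close>.\<close>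

section \<open>Complex inner product and matrices\<close>

lemma cinner_cnj: "cnj (cinner u w) = cinner w u"
  unfolding cinner_def by (simp add: mult.commute)

lemma cinner_add_right: "cinner u (v + w) = cinner u v + cinner u w"
  unfolding cinner_def by (simp add: sum.distrib algebra_simps)

lemma cinner_diff_right: "cinner u (v - w) = cinner u v - cinner u w"
  unfolding cinner_def by (simp add: sum_subtractf algebra_simps)

lemma cinner_diff_left: "cinner (u - v) w = cinner u w - cinner v w"
  unfolding cinner_def by (simp add: sum_subtractf algebra_simps)

lemma cinner_scale_left: "cinner (c *s u) w = cnj c * cinner u w"
  unfolding cinner_def by (simp add: sum_distrib_left mult_ac)

lemma cinner_scale_right: "cinner u (c *s w) = c * cinner u w"
  unfolding cinner_def by (simp add: sum_distrib_left mult_ac)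

lemma cinner_zero_left [simp]: "cinner 0 w = 0"
  unfolding cinner_def by simp

lemma sum_delta_mult: "(\<Sum>b\<in>UNIV. (if b = x then c else 0) * (v :: complex ^ 'i::finite) $ b) = c * v $ x"
  by (simp add: if_distrib if_distribR cong: if_cong)

lemma cinner_axis: "cinner (axis b c) w = cnj c * w $ b"
  unfolding cinner_def axis_def by (simp add: if_distrib if_distribR cong: if_cong)

lemma matrix_vector_mult_axis: "(A *v axis a c) $ b = A $ b $ a * c"
  unfolding matrix_vector_mult_def axis_def by (simp add: if_distrib if_distribR cong: if_cong)

lemma inner_eq_Re_cinner: "inner x y = Re (cinner x (y :: complex ^ 'i :: finite))"
  unfolding inner_vec_def cinner_def inner_complex_def by (simp add: Re_sum)

lemma cinner_self: "cinner v v = complex_of_real (inner v (v :: complex ^ 'i))"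
  unfolding cinner_def inner_vec_def inner_complex_def
  by (simp add: complex_eq_iff Re_sum Im_sum power2_eq_square)

lemma cinner_self_eq_0: "cinner v v = 0 \<longleftrightarrow> v = (0 :: complex ^ 'i :: finite)"
  by (simp add: cinner_self)

lemma cinner_self_norm: "cinner v v = complex_of_real ((norm v)\<^sup>2)"
  by (simp add: cinner_self power2_norm_eq_inner)

lemma cinner_matrix_vector_mult: "cinner (A *v u) w = cinner u (adjoint_mat A *v w)"
  unfolding cinner_def adjoint_mat_def matrix_vector_mult_def
  by (simp add: sum_distrib_left sum_distrib_right mult_ac) (rule sum.swap)

lemma cinner_hermitian:
  assumes "adjoint_mat A = A"
  shows "cinner (A *v u) w = cinner u (A *v w)"
  using cinner_matrix_vector_mult[of A u w] assms by simp

lemma smult_mat_vector_mult: "smult_mat c A *v v = c *s (A *v v)"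
  by (simp add: smult_mat_def matrix_vector_mult_def vec_eq_iff sum_distrib_left mult.assoc)

lemma sum_matrix_vector_mult: "(\<Sum>k\<in>S. A k) *v v = (\<Sum>k\<in>S. A k *v v)"
  by (induction S rule: infinite_finite_induct) (auto simp: matrix_vector_mult_add_rdistrib)

lemma outer_vector_mult: "outer \<psi> *v w = cinner \<psi> w *s (\<psi> :: complex ^ 'i::finite)"
  unfolding outer_def cinner_def matrix_vector_mult_def
  by (simp add: vec_eq_iff sum_distrib_left mult_ac)

lemma mtrace_mult_outer: "mtrace (A ** outer \<psi>) = cinner \<psi> (A *v (\<psi> :: complex ^ 'i::finite))"
  unfolding mtrace_def outer_def cinner_def matrix_vector_mult_def matrix_matrix_mult_def
  by (simp add: sum_distrib_left mult_ac)

lemma cinner_quadratic_form: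
  "cinner v (A *v v) = (\<Sum>a\<in>UNIV. \<Sum>b\<in>UNIV. A $ a $ b * (cnj (v $ a) * v $ b))"
  unfolding cinner_def matrix_vector_mult_def by (simp add: sum_distrib_left mult_ac)

lemma linear_vector_scalar_mult: "linear (\<lambda>v::complex ^ 'i::finite. c *s v)"
  by (rule linearI) (simp_all add: vec_eq_iff algebra_simps scaleR_conv_of_real)

section \<open>Orthogonal projections onto complex subspaces\<close>

text \<open>Vectors are treated as a real Euclidean space, so \<open>subspace\<close> and \<open>dim\<close> are real
  notions: a complex subspace is a real one closed under complex scalars, of twice its
  complex dimension.\<close>

definition complex_subspace :: "(complex ^ 'i::finite) set \<Rightarrow> bool" where
  "complex_subspace S \<longleftrightarrow> subspace S \<and> (\<forall>c v. v \<in> S \<longrightarrow> c *s v \<in> S)"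

definition subspace_proj :: "'a::euclidean_space set \<Rightarrow> 'a \<Rightarrow> 'a" where
  "subspace_proj S x = (SOME y. y \<in> S \<and> (\<forall>w\<in>S. inner (x - y) w = 0))"

context
  fixes S :: "'a::euclidean_space set"
  assumes S: "subspace S"
begin

lemma subspace_proj: "subspace_proj S x \<in> S" "w \<in> S \<Longrightarrow> inner (x - subspace_proj S x) w = 0"
proof -
  obtain y z where "y \<in> span S" "\<And>w. w \<in> span S \<Longrightarrow> orthogonal z w" "x = y + z"
    using orthogonal_subspace_decomp_exists[of S x] by blast
  then have "\<exists>y. y \<in> S \<and> (\<forall>w\<in>S. inner (x - y) w = 0)"
    using S by (auto simp: orthogonal_def span_eq_iff[THEN iffD2])
  from someI_ex[OF this] show "subspace_proj S x \<in> S" "w \<in> S \<Longrightarrow> inner (x - subspace_proj S x) w = 0"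
    unfolding subspace_proj_def by auto
qed

lemma subspace_proj_unique:
  assumes "y \<in> S" and "\<And>w. w \<in> S \<Longrightarrow> inner (x - y) w = 0"
  shows "subspace_proj S x = y"
proof -
  have d: "subspace_proj S x - y \<in> S" using subspace_proj(1) assms(1) S by (simp add: subspace_diff)
  have "inner (subspace_proj S x - y) (subspace_proj S x - y)
      = inner (x - y) (subspace_proj S x - y) - inner (x - subspace_proj S x) (subspace_proj S x - y)"
    by (simp add: inner_diff_left)
  also have "\<dots> = 0" using assms(2)[OF d] subspace_proj(2)[OF d] by simp
  finally show ?thesis by simp
qed

lemma subspace_proj_fixes: "y \<in> S \<Longrightarrow> subspace_proj S y = y"
  by (rule subspace_proj_unique) simp_all

lemma subspace_proj_add: "subspace_proj S (x + y) = subspace_proj S x + subspace_proj S y"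
proof (rule subspace_proj_unique)
  show "subspace_proj S x + subspace_proj S y \<in> S" using subspace_proj(1) S by (simp add: subspace_add)
  fix w assume w: "w \<in> S"
  have "x + y - (subspace_proj S x + subspace_proj S y) = (x - subspace_proj S x) + (y - subspace_proj S y)"
    by simp
  then show "inner (x + y - (subspace_proj S x + subspace_proj S y)) w = 0"
    using subspace_proj(2)[OF w, of x] subspace_proj(2)[OF w, of y] by (simp only: inner_add_left)
qed

end

context
  fixes S :: "(complex ^ 'i::finite) set"
  assumes S: "complex_subspace S"
begin

lemma subspace_complex_subspace: "subspace S"
  using S by (simp add: complex_subspace_def)

text \<open>Real orthogonality to a complex subspace is complex orthogonality: test with \<open>w\<close> and \<open>\<i> w\<close>.\<close>

lemma cinner_subspace_proj_orthogonal:
  assumes "w \<in> S"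
  shows "cinner w (x - subspace_proj S x) = 0" and "cinner (x - subspace_proj S x) w = 0"
proof -
  have Re_cinner: "Re (cinner u z) = inner z u" for u z :: "complex ^ 'i"
    unfolding inner_eq_Re_cinner by (subst cinner_cnj[of z u, symmetric]) simp
  have "\<i> *s w \<in> S" using S assms by (simp add: complex_subspace_def)
  then have "Re (cinner w (x - subspace_proj S x)) = 0" "Re (cinner (\<i> *s w) (x - subspace_proj S x)) = 0"
    unfolding Re_cinner using subspace_proj(2)[OF subspace_complex_subspace] assms by auto
  then show "cinner w (x - subspace_proj S x) = 0" by (simp add: cinner_scale_left complex_eq_iff)
  then show "cinner (x - subspace_proj S x) w = 0" by (metis cinner_cnj complex_cnj_zero)
qed

lemma subspace_proj_scale: "subspace_proj S (c *s x) = c *s subspace_proj S x"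
proof (rule subspace_proj_unique[OF subspace_complex_subspace])
  show "c *s subspace_proj S x \<in> S"
    using S subspace_proj(1)[OF subspace_complex_subspace] by (simp add: complex_subspace_def)
  fix w assume "w \<in> S"
  have e: "c *s x - c *s subspace_proj S x = c *s (x - subspace_proj S x)"
    by (simp add: vec_eq_iff algebra_simps)
  show "inner (c *s x - c *s subspace_proj S x) w = 0"
    unfolding e inner_eq_Re_cinner cinner_scale_left cinner_subspace_proj_orthogonal(2)[OF \<open>w \<in> S\<close>]
    by simp
qed

lemma cinner_subspace_proj: "cinner (subspace_proj S u) w = cinner u (subspace_proj S w)"
proof -
  note proj_in = subspace_proj(1)[OF subspace_complex_subspace]
  have "cinner (subspace_proj S u) w = cinner (subspace_proj S u) (subspace_proj S w)"
    using cinner_subspace_proj_orthogonal(1)[OF proj_in[of u], of w] by (simp add: cinner_diff_right)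
  also have "\<dots> = cinner u (subspace_proj S w)"
    using cinner_subspace_proj_orthogonal(2)[OF proj_in[of w], of u] by (simp add: cinner_diff_left)
  finally show ?thesis .
qed

lemma subspace_proj_matrix: "matrix (subspace_proj S) *v x = subspace_proj S x"
proof -
  have "Vector_Spaces.linear (*s) (*s) (subspace_proj S)"
    unfolding Vector_Spaces.linear_iff
    using subspace_proj_add[OF subspace_complex_subspace] subspace_proj_scale vec.vector_space_axioms
    by auto
  then show ?thesis by (rule matrix_works)
qed

lemma orthogonal_projector_eq_subspace_proj:
  assumes idem: "P ** P = P" and adj: "adjoint_mat P = P" and ran: "range (\<lambda>v. P *v v) = S"
  shows "P *v x = subspace_proj S x"
proof (rule sym, rule subspace_proj_unique[OF subspace_complex_subspace])
  show "P *v x \<in> S" using ran by blast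
  fix w assume "w \<in> S"
  then obtain u where u: "w = P *v u" using ran by (metis imageE)
  have "cinner (x - P *v x) (P *v u) = cinner (P *v (x - P *v x)) u"
    using cinner_hermitian[OF adj] by simp
  also have "P *v (x - P *v x) = 0"
    by (simp add: matrix_vector_mult_diff_distrib matrix_vector_mul_assoc idem)
  finally show "inner (x - P *v x) w = 0" by (simp add: inner_eq_Re_cinner u)
qed

lemma orth_proj_onto_unique_exists: "\<exists>!P. P ** P = P \<and> adjoint_mat P = P \<and> range (\<lambda>v. P *v v) = S"
proof -
  let ?p = "subspace_proj S" let ?P = "matrix ?p"
  note proj = subspace_proj[OF subspace_complex_subspace]
    and proj_fixes = subspace_proj_fixes[OF subspace_complex_subspace]
  have "?P ** ?P = ?P"
    by (simp add: matrix_eq matrix_vector_mul_assoc[symmetric] subspace_proj_matrix proj_fixes proj(1))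
  moreover have "cnj (?P $ b $ a) = ?P $ a $ b" for a b
  proof -
    have entry: "?P $ b $ a = cinner (axis b 1) (?p (axis a 1))" for a b
      using matrix_vector_mult_axis[of ?P a 1 b] by (simp add: cinner_axis subspace_proj_matrix)
    show ?thesis unfolding entry cinner_cnj by (rule cinner_subspace_proj)
  qed
  then have "adjoint_mat ?P = ?P" by (simp add: adjoint_mat_def vec_eq_iff)
  moreover have "range (\<lambda>v. ?P *v v) = S"
    using proj(1) proj_fixes by (auto simp: subspace_proj_matrix image_iff) metis
  moreover have "P = ?P" if "P ** P = P" "adjoint_mat P = P" "range (\<lambda>v. P *v v) = S" for P
    using orthogonal_projector_eq_subspace_proj[OF that] by (simp add: matrix_eq subspace_proj_matrix)
  ultimately show ?thesis by blast
qed

lemma orth_proj_onto: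
  "orth_proj_onto S ** orth_proj_onto S = orth_proj_onto S"
  "adjoint_mat (orth_proj_onto S) = orth_proj_onto S"
  "range (\<lambda>v. orth_proj_onto S *v v) = S"
  using theI'[OF orth_proj_onto_unique_exists] unfolding orth_proj_onto_def by auto

lemma orth_proj_onto_idem: "orth_proj_onto S *v (orth_proj_onto S *v x) = orth_proj_onto S *v x"
  by (metis orth_proj_onto(1) matrix_vector_mul_assoc)

lemma orth_proj_onto_in: "orth_proj_onto S *v x \<in> S"
  using orth_proj_onto(3) by blast

lemma orth_proj_onto_fixes: "y \<in> S \<Longrightarrow> orth_proj_onto S *v y = y"
  using orth_proj_onto(3) orth_proj_onto_idem by (metis (no_types, lifting) imageE)

lemma cinner_orth_proj_onto: "cinner (orth_proj_onto S *v u) w = cinner u (orth_proj_onto S *v w)"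
  using orth_proj_onto(2) by (rule cinner_hermitian)

lemma orth_proj_onto_kernel_invariant:
  assumes adj: "\<And>u w. cinner (A *v u) w = cinner u (B *v w)"
    and B: "\<And>x. x \<in> S \<Longrightarrow> B *v x \<in> S"
    and v: "orth_proj_onto S *v v = 0"
  shows "orth_proj_onto S *v (A *v v) = 0"
proof -
  let ?P = "orth_proj_onto S" let ?w = "?P *v (A *v v)"
  have "cinner ?w ?w = cinner (A *v v) (?P *v ?w)" by (rule cinner_orth_proj_onto)
  also have "?P *v ?w = ?w" by (rule orth_proj_onto_idem)
  also have "cinner (A *v v) ?w = cinner v (B *v ?w)" by (rule adj)
  also have "B *v ?w = ?P *v (B *v ?w)" using orth_proj_onto_fixes[OF B[OF orth_proj_onto_in]] by simp
  also have "cinner v (?P *v (B *v ?w)) = cinner (?P *v v) (B *v ?w)"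
    by (rule cinner_orth_proj_onto[symmetric])
  finally show ?thesis using v by (simp add: cinner_self_eq_0)
qed

lemma orth_proj_onto_commute:
  assumes adj: "\<And>u w. cinner (A *v u) w = cinner u (A *v w)"
    and A: "\<And>x. x \<in> S \<Longrightarrow> A *v x \<in> S"
  shows "orth_proj_onto S *v (A *v x) = A *v (orth_proj_onto S *v x)"
proof -
  let ?P = "orth_proj_onto S"
  have "?P *v (x - ?P *v x) = 0"
    by (simp add: matrix_vector_mult_diff_distrib orth_proj_onto_idem)
  note K = orth_proj_onto_kernel_invariant[OF adj A this]
  have "?P *v (A *v x) = ?P *v (A *v (?P *v x)) + ?P *v (A *v (x - ?P *v x))"
    by (simp add: matrix_vector_mult_diff_distrib)
  also have "?P *v (A *v (?P *v x)) = A *v (?P *v x)"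
    by (rule orth_proj_onto_fixes[OF A[OF orth_proj_onto_in]])
  also have "?P *v (A *v (x - ?P *v x)) = 0"
    by (rule K)
  finally show ?thesis by simp
qed

end

lemma inner_self_eq_sum_orthonormal:
  fixes U :: "'a::euclidean_space set"
  assumes fin: "finite U" and orth: "pairwise orthogonal U" and nrm: "\<And>u. u \<in> U \<Longrightarrow> norm u = 1"
    and y: "y \<in> span U"
  shows "inner y y = (\<Sum>u\<in>U. (inner u y)\<^sup>2)"
proof -
  obtain c where yc: "y = (\<Sum>v\<in>U. c v *\<^sub>R v)"
    using y span_finite[OF fin] by auto
  have coeff: "inner u y = c u" if "u \<in> U" for u
  proof -
    have "inner u y = (\<Sum>v\<in>U. c v * inner u v)" by (simp add: yc inner_sum_right)
    also have "\<dots> = (\<Sum>v\<in>U. if v = u then c v else 0)"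
    proof (rule sum.cong[OF refl])
      fix v assume v: "v \<in> U"
      show "c v * inner u v = (if v = u then c v else 0)"
        using nrm[OF v] orth v that by (auto simp: pairwise_def orthogonal_def dot_square_norm)
    qed
    also have "\<dots> = c u" using that fin by simp
    finally show ?thesis .
  qed
  have "inner y y = (\<Sum>v\<in>U. c v * inner v y)" by (subst (1) yc) (simp add: inner_sum_left)
  also have "\<dots> = (\<Sum>v\<in>U. (inner v y)\<^sup>2)" by (intro sum.cong refl) (simp add: coeff power2_eq_square)
  finally show ?thesis .
qed

lemma inner_self_eq_sum_Basis_subset:
  fixes u :: "'a::euclidean_space"
  assumes B: "B \<subseteq> Basis" and u: "u \<in> span B"
  shows "inner u u = (\<Sum>b\<in>B. (inner u b)\<^sup>2)"
proof -
  have "inner u b = 0" if "b \<in> Basis - B" for b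
  proof -
    have "orthogonal b u"
      by (rule orthogonal_to_span[OF u])
         (use that B in \<open>auto simp: orthogonal_def intro!: inner_not_same_Basis\<close>)
    then show ?thesis by (simp add: orthogonal_def inner_commute)
  qed
  then have "(\<Sum>b\<in>B. (inner u b)\<^sup>2) = (\<Sum>b\<in>Basis. (inner u b)\<^sup>2)"
    by (intro sum.mono_neutral_left) (use B in auto)
  also have "\<dots> = inner u u" by (simp add: euclidean_inner[of u u] power2_eq_square)
  finally show ?thesis ..
qed

lemma sum_Basis_inner_proj_eq_dim:
  fixes f :: "'a::euclidean_space \<Rightarrow> 'a"
  assumes B: "B \<subseteq> Basis" and lin: "linear f" and sa: "\<And>x y. inner (f x) y = inner x (f y)"
    and idem: "\<And>x. f (f x) = f x" and st: "f ` span B \<subseteq> span B"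
  shows "(\<Sum>b\<in>B. inner b (f b)) = real (dim (f ` span B))"
proof -
  let ?F = "f ` span B"
  obtain U where U: "U \<subseteq> ?F" "pairwise orthogonal U" "\<And>x. x \<in> U \<Longrightarrow> norm x = 1"
    "independent U" "card U = dim ?F" "span U = ?F"
    using orthonormal_basis_subspace[OF linear_subspace_image[OF lin subspace_span]] by blast
  have finU: "finite U" using U(4) independent_imp_finite by blast
  have fixU: "f u = u" if "u \<in> U" for u using U(1) that idem by auto
  have diag: "inner b (f b) = (\<Sum>u\<in>U. (inner u b)\<^sup>2)" if "b \<in> B" for b
  proof -
    have fbU: "f b \<in> span U" using U(6) that span_base[of b B] by blast
    have "inner b (f b) = inner (f b) (f b)" using sa[of b "f b"] idem[of b] by simp
    also have "\<dots> = (\<Sum>u\<in>U. (inner u (f b))\<^sup>2)"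
      by (rule inner_self_eq_sum_orthonormal[OF finU U(2) U(3) fbU])
    also have "\<dots> = (\<Sum>u\<in>U. (inner u b)\<^sup>2)"
      by (intro sum.cong refl) (metis sa fixU inner_commute)
    finally show ?thesis .
  qed
  have unit: "(\<Sum>b\<in>B. (inner u b)\<^sup>2) = 1" if "u \<in> U" for u
  proof -
    have "u \<in> span B" using U(1) st that by blast
    then show ?thesis using inner_self_eq_sum_Basis_subset[OF B] U(3)[OF that] by (metis dot_square_norm power_one)
  qed
  have "(\<Sum>b\<in>B. inner b (f b)) = (\<Sum>b\<in>B. \<Sum>u\<in>U. (inner u b)\<^sup>2)" by (intro sum.cong refl diag)
  also have "\<dots> = (\<Sum>u\<in>U. \<Sum>b\<in>B. (inner u b)\<^sup>2)" by (rule sum.swap)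
  also have "\<dots> = real (dim ?F)" using U(5) by (simp add: unit)
  finally show ?thesis .
qed

section \<open>Collective spin operators\<close>

text \<open>\<open>a k\<close> means that qubit \<open>k\<close> is in \<open>|1\<rangle>\<close>, i.e. spin down; hence the sign of
  \<open>magnetization\<close>.\<close>

definition flip_qubit :: "'n \<Rightarrow> ('n \<Rightarrow> bool) \<Rightarrow> ('n \<Rightarrow> bool)" where
  "flip_qubit k a = a(k := \<not> a k)"

lemma flip_qubit_flip_qubit [simp]: "flip_qubit k (flip_qubit k a) = a"
  by (auto simp: flip_qubit_def)

lemma flip_qubit_same [simp]: "flip_qubit k a k = (\<not> a k)"
  by (simp add: flip_qubit_def)

lemma flip_qubit_commute: "flip_qubit k (flip_qubit l a) = flip_qubit l (flip_qubit k a)"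
  by (auto simp: flip_qubit_def fun_eq_iff)

lemma set_flip_qubit_false: "\<not> a k \<Longrightarrow> {l. flip_qubit k a l} = insert k {l. a l}"
  by (auto simp: flip_qubit_def)

lemma set_not_flip_qubit_true: "a k \<Longrightarrow> {l. \<not> flip_qubit k a l} = insert k {l. \<not> a l}"
  by (auto simp: flip_qubit_def)

definition popcount :: "('n::finite \<Rightarrow> bool) \<Rightarrow> nat" where
  "popcount a = card {k. a k}"

definition magnetization :: "('n::finite \<Rightarrow> bool) \<Rightarrow> real" where
  "magnetization a = real CARD('n) / 2 - real (popcount a)"

lemma popcount_le: "popcount (a :: 'n::finite \<Rightarrow> bool) \<le> CARD('n)"
  unfolding popcount_def by (simp add: card_mono)

lemma card_false_qubits:
  "real (card {k. \<not> a k}) = real (popcount a) + 2 * magnetization (a :: 'n::finite \<Rightarrow> bool)"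
proof -
  have "card {k. a k} + card {k. \<not> a k} = card ({k. a k} \<union> {k. \<not> a k})"
    by (rule card_Un_disjoint[symmetric]) auto
  also have "{k. a k} \<union> {k. \<not> a k} = UNIV" by auto
  finally have "real (card {k. a k}) + real (card {k. \<not> a k}) = real CARD('n)"
    by (simp flip: of_nat_add)
  then show ?thesis unfolding popcount_def magnetization_def by simp
qed

lemma popcount_flip_qubit_false: "\<not> a k \<Longrightarrow> popcount (flip_qubit k a) = popcount a + 1"
  unfolding popcount_def by (simp add: set_flip_qubit_false)

lemma magnetization_flip_qubit_false: "\<not> a k \<Longrightarrow> magnetization (flip_qubit k a) = magnetization a - 1"
  unfolding magnetization_def by (simp add: popcount_flip_qubit_false)

lemma magnetization_flip_qubit_true: "a k \<Longrightarrow> magnetization (flip_qubit k a) = magnetization a + 1"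
  using magnetization_flip_qubit_false[of "flip_qubit k a" k] by simp

lemma sum_UNIV_split: "(\<Sum>k\<in>(UNIV::'n::finite set). f k) = (\<Sum>k\<in>{k. P k}. f k) + (\<Sum>k\<in>{k. \<not> P k}. f k)"
  by (subst sum.union_disjoint[symmetric]) (auto intro: sum.cong)

text \<open>The ladder operators \<open>S\<^sub>\<plusminus> = S\<^sub>x \<plusminus> \<i> S\<^sub>y\<close>.\<close>

definition spin_raise :: "'n::finite qop" where
  "spin_raise = (\<chi> a b. \<Sum>k\<in>UNIV. if b = flip_qubit k a \<and> \<not> a k then 1 else 0)"

definition spin_lower :: "'n::finite qop" where
  "spin_lower = (\<chi> a b. \<Sum>k\<in>UNIV. if b = flip_qubit k a \<and> a k then 1 else 0)"

lemma sum_delta_flip_qubit: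
  fixes v :: "complex ^ ('n::finite \<Rightarrow> bool)"
  shows "(\<Sum>b\<in>UNIV. (if b = flip_qubit k a \<and> P then 1 else 0) * v $ b) = (if P then v $ flip_qubit k a else 0)"
  by (cases P) (auto simp: if_distrib if_distribR cong: if_cong)

lemma spin_raise_apply: "(spin_raise *v v) $ a = (\<Sum>k\<in>{k. \<not> a k}. v $ flip_qubit k a)"
proof -
  have "(spin_raise *v v) $ a
      = (\<Sum>k\<in>UNIV. \<Sum>b\<in>UNIV. (if b = flip_qubit k a \<and> \<not> a k then 1 else 0) * v $ b)"
    unfolding spin_raise_def matrix_vector_mult_def vec_lambda_beta sum_distrib_right
    by (rule sum.swap)
  then show ?thesis by (simp only: sum_delta_flip_qubit) (simp add: sum.If_cases Int_def)
qed

lemma spin_lower_apply: "(spin_lower *v v) $ a = (\<Sum>k\<in>{k. a k}. v $ flip_qubit k a)"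
proof -
  have "(spin_lower *v v) $ a
      = (\<Sum>k\<in>UNIV. \<Sum>b\<in>UNIV. (if b = flip_qubit k a \<and> a k then 1 else 0) * v $ b)"
    unfolding spin_lower_def matrix_vector_mult_def vec_lambda_beta sum_distrib_right
    by (rule sum.swap)
  then show ?thesis by (simp only: sum_delta_flip_qubit) (simp add: sum.If_cases Int_def)
qed

lemma sigma_x_apply: "(sigma_x k *v v) $ a = v $ flip_qubit k a"
  unfolding sigma_x_def matrix_vector_mult_def flip_qubit_def[symmetric]
  by (simp only: vec_lambda_beta sum_delta_mult) simp

lemma sigma_y_apply: "(sigma_y k *v v) $ a = (if a k then \<i> else - \<i>) * v $ flip_qubit k a"
  unfolding sigma_y_def matrix_vector_mult_def flip_qubit_def[symmetric]
  by (simp only: vec_lambda_beta sum_delta_mult)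

lemma sigma_z_apply: "(sigma_z k *v v) $ a = (if a k then -1 else 1) * v $ a"
  unfolding sigma_z_def matrix_vector_mult_def by (simp only: vec_lambda_beta sum_delta_mult)

lemma spin_x_eq: "spin_x *v v = (1/2) *s (spin_raise *v v + spin_lower *v v)"
  unfolding vec_eq_iff spin_x_def smult_mat_vector_mult sum_matrix_vector_mult
  by (simp add: sum_component sigma_x_apply spin_raise_apply spin_lower_apply
      sum_UNIV_split[of _ "\<lambda>k. _ k"] add.commute)

lemma spin_y_eq: "spin_y *v v = (\<i>/2) *s (spin_lower *v v - spin_raise *v v)"
proof -
  have "(\<Sum>k\<in>UNIV. (sigma_y k *v v) $ a)
      = (\<Sum>k\<in>{k. a k}. \<i> * v $ flip_qubit k a) + (\<Sum>k\<in>{k. \<not> a k}. - \<i> * v $ flip_qubit k a)" for a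
    unfolding sigma_y_apply by (subst sum_UNIV_split[of _ a]) (intro arg_cong2[where f="(+)"] sum.cong; simp)
  then show ?thesis
    unfolding vec_eq_iff spin_y_def smult_mat_vector_mult sum_matrix_vector_mult
    by (simp add: sum_component spin_raise_apply spin_lower_apply sum_negf
        sum_distrib_left[symmetric] algebra_simps)
qed

lemma spin_z_apply: "(spin_z *v v) $ a = complex_of_real (magnetization a) * v $ a"
proof -
  have "(\<Sum>k\<in>UNIV. if a k then -1 else 1) = complex_of_real (2 * magnetization a)"
  proof -
    have "(\<Sum>k\<in>UNIV. if a k then -1 else (1::complex))
        = of_nat (card {k. \<not> a k}) - of_nat (card {k. a k})"
      by (subst sum_UNIV_split[of _ a]) simp
    also have "\<dots> = complex_of_real (real (card {k. \<not> a k}) - real (card {k. a k}))"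
      by simp
    also have "\<dots> = complex_of_real (2 * magnetization a)"
      by (simp add: card_false_qubits popcount_def)
    finally show ?thesis .
  qed
  then show ?thesis
    unfolding spin_z_def smult_mat_vector_mult sum_matrix_vector_mult
    by (simp add: sum_component sigma_z_apply sum_distrib_right[symmetric])
qed

lemma spin_z_raise_commute:
  "spin_z *v (spin_raise *v v) = spin_raise *v (spin_z *v v) + spin_raise *v v"
  by (simp add: vec_eq_iff spin_z_apply spin_raise_apply sum_distrib_left
      magnetization_flip_qubit_false sum.distrib[symmetric] algebra_simps)

lemma spin_z_lower_commute:
  "spin_z *v (spin_lower *v v) = spin_lower *v (spin_z *v v) - spin_lower *v v"
  by (simp add: vec_eq_iff spin_z_apply spin_lower_apply sum_distrib_left
      magnetization_flip_qubit_true sum_subtractf[symmetric] algebra_simps)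

lemma spin_raise_lower_commute:
  "spin_raise *v (spin_lower *v v) = spin_lower *v (spin_raise *v v) + 2 *s (spin_z *v v)"
proof -
  have "(spin_raise *v (spin_lower *v v)) $ a
      = (spin_lower *v (spin_raise *v v)) $ a + 2 * (spin_z *v v) $ a" for a
  proof -
    let ?F = "{l. \<not> a l}" and ?T = "{l. a l}"
    let ?flips = "\<lambda>A B. \<Sum>k\<in>A. \<Sum>l\<in>B. v $ flip_qubit l (flip_qubit k a)"
    \<comment> \<open>the terms flipping two distinct bits cancel; flipping a bit back leaves \<open>v $ a\<close>\<close>
    have "(spin_raise *v (spin_lower *v v)) $ a = (\<Sum>k\<in>?F. v $ a + (\<Sum>l\<in>?T. v $ flip_qubit l (flip_qubit k a)))"
      unfolding spin_raise_apply spin_lower_apply by (intro sum.cong refl) (simp add: set_flip_qubit_false)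
    then have raise_lower: "(spin_raise *v (spin_lower *v v)) $ a = of_nat (card ?F) * v $ a + ?flips ?F ?T"
      by (simp add: sum.distrib)
    have "(spin_lower *v (spin_raise *v v)) $ a = (\<Sum>k\<in>?T. v $ a + (\<Sum>l\<in>?F. v $ flip_qubit l (flip_qubit k a)))"
      unfolding spin_raise_apply spin_lower_apply by (intro sum.cong refl) (simp add: set_not_flip_qubit_true)
    then have lower_raise: "(spin_lower *v (spin_raise *v v)) $ a = of_nat (card ?T) * v $ a + ?flips ?T ?F"
      by (simp add: sum.distrib)
    have "?flips ?F ?T = ?flips ?T ?F"
      by (subst sum.swap) (simp add: flip_qubit_commute)
    moreover have "real (card ?F) = real (card ?T) + 2 * magnetization a"
      unfolding card_false_qubits popcount_def ..
    then have "(of_nat (card ?F) :: complex) = of_nat (card ?T) + 2 * complex_of_real (magnetization a)"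
      by (metis of_real_add of_real_mult of_real_numeral of_real_of_nat_eq)
    ultimately show ?thesis
      unfolding raise_lower lower_raise spin_z_apply by (simp add: algebra_simps)
  qed
  then show ?thesis by (simp add: vec_eq_iff)
qed

lemma total_spin_sq_eq:
  "total_spin_sq *v v = spin_lower *v (spin_raise *v v) + spin_z *v (spin_z *v v) + spin_z *v v"
proof -
  let ?R = "\<lambda>v. spin_raise *v v" and ?L = "\<lambda>v. spin_lower *v v"
  have "total_spin_sq *v v = spin_x *v (spin_x *v v) + spin_y *v (spin_y *v v) + spin_z *v (spin_z *v v)"
    by (simp add: total_spin_sq_def matrix_vector_mult_add_rdistrib matrix_vector_mul_assoc)
  also have "\<dots> = (1/4) *s (?R (?R v) + ?R (?L v) + ?L (?R v) + ?L (?L v))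
      - (1/4) *s (?L (?L v) - ?L (?R v) - ?R (?L v) + ?R (?R v)) + spin_z *v (spin_z *v v)"
    unfolding spin_x_eq spin_y_eq
    by (simp add: vector_scalar_commute matrix_vector_right_distrib matrix_vector_mult_diff_distrib
        vec_eq_iff algebra_simps)
  also have "\<dots> = ?L (?R v) + spin_z *v (spin_z *v v) + spin_z *v v"
    unfolding spin_raise_lower_commute by (simp add: vec_eq_iff algebra_simps)
  finally show ?thesis .
qed

lemma total_spin_sq_spin_z_commute:
  "total_spin_sq *v (spin_z *v v) = spin_z *v (total_spin_sq *v (v::'n::finite qstate))"
  unfolding total_spin_sq_eq
  by (simp only: spin_z_raise_commute spin_z_lower_commute matrix_vector_right_distrib
      matrix_vector_mult_diff_distrib)
     (simp only: vec_eq_iff vector_add_component vector_minus_component, simp add: algebra_simps)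

lemma total_spin_sq_spin_lower_commute:
  "total_spin_sq *v (spin_lower *v v) = spin_lower *v (total_spin_sq *v (v::'n::finite qstate))"
  unfolding total_spin_sq_eq
  by (simp only: spin_z_raise_commute spin_z_lower_commute spin_raise_lower_commute
      matrix_vector_right_distrib matrix_vector_mult_diff_distrib vector_scalar_commute)
     (simp only: vec_eq_iff vector_add_component vector_minus_component vector_smult_component,
      simp add: algebra_simps)

lemma total_spin_sq_highest_weight:
  assumes "spin_z *v v = complex_of_real m *s v" and "spin_raise *v v = 0"
  shows "total_spin_sq *v v = complex_of_real (m * (m + 1)) *s (v::'n::finite qstate)"
  unfolding total_spin_sq_eq assms(2) assms(1) vector_scalar_commute matrix_vector_mult_0_right
  by (simp add: vec_eq_iff algebra_simps)

lemma cinner_spin_lower: "cinner (spin_lower *v u) w = cinner u (spin_raise *v (w::'n::finite qstate))"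
proof -
  have "cinner (spin_lower *v u) w = (\<Sum>a\<in>UNIV. \<Sum>k\<in>UNIV. if a k then cnj (u $ flip_qubit k a) * w $ a else 0)"
    unfolding cinner_def spin_lower_apply by (simp add: sum_distrib_right sum.If_cases Int_def)
  also have "\<dots> = (\<Sum>k\<in>UNIV. \<Sum>a\<in>UNIV. if a k then cnj (u $ flip_qubit k a) * w $ a else 0)"
    by (rule sum.swap)
  also have "\<dots> = (\<Sum>k\<in>UNIV. \<Sum>b\<in>UNIV. if \<not> b k then cnj (u $ b) * w $ flip_qubit k b else 0)"
  proof (rule sum.cong[OF refl])
    fix k
    show "(\<Sum>a\<in>UNIV. if a k then cnj (u $ flip_qubit k a) * w $ a else 0)
        = (\<Sum>b\<in>UNIV. if \<not> b k then cnj (u $ b) * w $ flip_qubit k b else 0)"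
      by (rule sum.reindex_bij_witness[where i="flip_qubit k" and j="flip_qubit k"]) auto
  qed
  also have "\<dots> = (\<Sum>b\<in>UNIV. \<Sum>k\<in>UNIV. if \<not> b k then cnj (u $ b) * w $ flip_qubit k b else 0)"
    by (rule sum.swap)
  also have "\<dots> = cinner u (spin_raise *v w)"
    unfolding cinner_def spin_raise_apply by (simp add: sum_distrib_left sum.If_cases Int_def)
  finally show ?thesis .
qed

lemma cinner_spin_raise: "cinner (spin_raise *v u) w = cinner u (spin_lower *v (w::'n::finite qstate))"
  by (metis cinner_spin_lower cinner_cnj)

lemma cinner_spin_z: "cinner (spin_z *v u) w = cinner u (spin_z *v (w::'n::finite qstate))"
  unfolding cinner_def spin_z_apply by (simp add: mult_ac)

section \<open>The low-spin subspace and the sectors of fixed excitation number\<close>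

definition total_spin_eigenspace :: "real \<Rightarrow> 'n::finite qstate set" where
  "total_spin_eigenspace c = {v. total_spin_sq *v v = complex_of_real c *s v}"

lemma low_spin_space_eq:
  "low_spin_space J = span (\<Union>j\<in>{j. 0 \<le> j \<and> j \<le> J}. total_spin_eigenspace (j * (j + 1)))"
  unfolding low_spin_space_def total_spin_eigenspace_def by simp

lemma low_spin_space_invariant:
  fixes f :: "'n::finite qstate \<Rightarrow> 'n qstate"
  assumes "linear f" and "\<And>c v. v \<in> total_spin_eigenspace c \<Longrightarrow> f v \<in> total_spin_eigenspace c"
    and "x \<in> low_spin_space J"
  shows "f x \<in> low_spin_space J"
proof -
  let ?E = "\<Union>j\<in>{j. 0 \<le> j \<and> j \<le> J}. total_spin_eigenspace (j * (j + 1)) :: 'n qstate set"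
  have "f ` span ?E = span (f ` ?E)" by (rule span_linear_image[OF assms(1), symmetric])
  also have "\<dots> \<subseteq> span ?E" using assms(2) by (intro span_mono) blast
  finally show ?thesis using assms(3) unfolding low_spin_space_eq by blast
qed

lemma complex_subspace_low_spin_space: "complex_subspace (low_spin_space J)"
  unfolding complex_subspace_def
proof (intro conjI allI impI)
  show "subspace (low_spin_space J)" unfolding low_spin_space_def by (rule subspace_span)
  fix c :: complex and v :: "'a qstate" assume "v \<in> low_spin_space J"
  then show "c *s v \<in> low_spin_space J"
    by (rule low_spin_space_invariant[OF linear_vector_scalar_mult, rotated])
       (simp add: total_spin_eigenspace_def vector_scalar_commute vec_eq_iff mult_ac)
qed

lemma spin_lower_low_spin_space: "x \<in> low_spin_space J \<Longrightarrow> spin_lower *v x \<in> low_spin_space J"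
  by (rule low_spin_space_invariant[OF matrix_vector_mul_linear])
     (simp_all add: total_spin_eigenspace_def total_spin_sq_spin_lower_commute vector_scalar_commute)

lemma spin_z_low_spin_space: "x \<in> low_spin_space J \<Longrightarrow> spin_z *v x \<in> low_spin_space J"
  by (rule low_spin_space_invariant[OF matrix_vector_mul_linear])
     (simp_all add: total_spin_eigenspace_def total_spin_sq_spin_z_commute vector_scalar_commute)

lemmas proj_J_idem = orth_proj_onto_idem[OF complex_subspace_low_spin_space, folded proj_J_def]
lemmas proj_J_fixes = orth_proj_onto_fixes[OF complex_subspace_low_spin_space, folded proj_J_def]
lemmas cinner_proj_J = cinner_orth_proj_onto[OF complex_subspace_low_spin_space, folded proj_J_def]

lemma proj_J_spin_z_commute: "proj_J J *v (spin_z *v x) = spin_z *v (proj_J J *v x)"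
  unfolding proj_J_def
  by (rule orth_proj_onto_commute[OF complex_subspace_low_spin_space cinner_spin_z spin_z_low_spin_space])

lemma proj_J_spin_raise_kernel: "proj_J J *v v = 0 \<Longrightarrow> proj_J J *v (spin_raise *v v) = 0"
  unfolding proj_J_def
  by (rule orth_proj_onto_kernel_invariant[OF complex_subspace_low_spin_space cinner_spin_raise
        spin_lower_low_spin_space])

definition excitation_space :: "nat \<Rightarrow> 'n::finite qstate set" where
  "excitation_space t = {v. \<forall>a. popcount a \<noteq> t \<longrightarrow> v $ a = 0}"

definition high_spin_sector :: "real \<Rightarrow> nat \<Rightarrow> 'n::finite qstate set" where
  "high_spin_sector J t = {v. proj_J J *v v = 0} \<inter> excitation_space t"

lemma subspace_excitation_space: "subspace (excitation_space t)"
  unfolding subspace_def excitation_space_def by auto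

lemma subspace_high_spin_sector: "subspace (high_spin_sector J t)"
  unfolding high_spin_sector_def
  by (rule subspace_inter[OF real_vector.linear_subspace_kernel[OF matrix_vector_mul_linear]
        subspace_excitation_space])

lemma excitation_space_iff_spin_z:
  "v \<in> excitation_space t
     \<longleftrightarrow> spin_z *v v = complex_of_real (real CARD('n::finite) / 2 - real t) *s (v :: 'n qstate)"
proof -
  have "complex_of_real (magnetization a) * v $ a = complex_of_real (real CARD('n) / 2 - real t) * v $ a
        \<longleftrightarrow> (popcount a \<noteq> t \<longrightarrow> v $ a = 0)" for a :: "'n \<Rightarrow> bool"
    by (simp only: mult_cancel_right of_real_eq_iff) (auto simp: magnetization_def)
  then show ?thesis
    unfolding excitation_space_def vec_eq_iff spin_z_apply vector_smult_component by blast
qed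

lemma spin_raise_excitation_space: "v \<in> excitation_space (Suc s) \<Longrightarrow> spin_raise *v v \<in> excitation_space s"
  unfolding excitation_space_def by (auto simp: spin_raise_apply popcount_flip_qubit_false intro!: sum.neutral)

lemma spin_raise_excitation_space_0: "v \<in> excitation_space 0 \<Longrightarrow> spin_raise *v v = 0"
  unfolding excitation_space_def
  by (auto simp: vec_eq_iff spin_raise_apply popcount_flip_qubit_false intro!: sum.neutral)

lemma excitation_space_proj_J_complement:
  fixes v :: "'n::finite qstate"
  assumes "v \<in> excitation_space t"
  shows "v - proj_J J *v v \<in> excitation_space t"
proof -
  let ?c = "complex_of_real (real CARD('n) / 2 - real t)"
  have "spin_z *v (v - proj_J J *v v) = spin_z *v v - proj_J J *v (spin_z *v v)"
    by (simp add: matrix_vector_mult_diff_distrib proj_J_spin_z_commute)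
  also have "\<dots> = ?c *s (v - proj_J J *v v)"
    using assms unfolding excitation_space_iff_spin_z
    by (simp only: vector_scalar_commute vector_ssub_ldistrib)
  finally show ?thesis unfolding excitation_space_iff_spin_z .
qed

text \<open>A highest-weight vector of magnetization \<open>m\<close> has total spin \<open>j(j+1) = m(m+1)\<close> with
  \<open>j = |m|\<close> or \<open>j = -m-1\<close>; as \<open>K\<close> is even, \<open>m\<close> is an integer, so \<open>0 \<le> j \<le> |m|\<close>.\<close>

lemma high_spin_sector_highest_weight_eq_0:
  assumes even: "even CARD('n::finite)" and v: "(v :: 'n qstate) \<in> high_spin_sector J t"
    and raise: "spin_raise *v v = 0" and small: "\<bar>real CARD('n) / 2 - real t\<bar> \<le> J"
  shows "v = 0"
proof -
  obtain h where K: "CARD('n) = 2 * h" using even by (metis evenE)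
  define m where "m = real h - real t"
  have mt: "real CARD('n) / 2 - real t = m" unfolding K m_def by simp
  have vt: "v \<in> excitation_space t" and vP: "proj_J J *v v = 0"
    using v unfolding high_spin_sector_def by auto
  have vz: "spin_z *v v = complex_of_real m *s v"
    using vt unfolding excitation_space_iff_spin_z mt .
  define j where "j = (if m \<ge> 0 then m else - m - 1)"
  have "m \<le> -1" if "m < 0"
  proof -
    have "Suc h \<le> t" using that unfolding m_def by simp
    then have "real (Suc h) \<le> real t" by (simp only: of_nat_le_iff)
    then show ?thesis unfolding m_def by simp
  qed
  then have "0 \<le> j" and "j \<le> J" and "j * (j + 1) = m * (m + 1)"
    using small K unfolding j_def m_def by (auto simp: algebra_simps)
  moreover have "v \<in> total_spin_eigenspace (m * (m + 1))"
    using total_spin_sq_highest_weight[OF vz raise] by (simp add: total_spin_eigenspace_def)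
  ultimately have "v \<in> low_spin_space J"
    unfolding low_spin_space_eq by (intro span_base) (auto intro!: exI[of _ j])
  then show ?thesis using vP by (simp add: proj_J_fixes)
qed

lemma dim_high_spin_sector_Suc_le:
  assumes even: "even CARD('n::finite)" and small: "\<bar>real CARD('n) / 2 - real (Suc s)\<bar> \<le> J"
  shows "dim (high_spin_sector J (Suc s) :: 'n qstate set) \<le> dim (high_spin_sector J s :: 'n qstate set)"
proof -
  let ?f = "\<lambda>v::'n qstate. spin_raise *v v" and ?V = "high_spin_sector J (Suc s) :: 'n qstate set"
  have "inj_on ?f ?V"
  proof (rule inj_onI)
    fix x y assume "x \<in> ?V" "y \<in> ?V" "?f x = ?f y"
    then have "x - y \<in> ?V" "?f (x - y) = 0"
      by (auto simp: subspace_diff[OF subspace_high_spin_sector] matrix_vector_mult_diff_distrib)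
    then have "x - y = 0" by (rule high_spin_sector_highest_weight_eq_0[OF even _ _ small])
    then show "x = y" by simp
  qed
  then have "dim ?V = dim (?f ` ?V)"
    by (intro dim_image_eq[symmetric] matrix_vector_mul_linear)
       (simp add: span_eq_iff[THEN iffD2, OF subspace_high_spin_sector])
  also have "\<dots> \<le> dim (high_spin_sector J s :: 'n qstate set)"
    by (intro dim_subset)
       (auto simp: high_spin_sector_def proj_J_spin_raise_kernel spin_raise_excitation_space)
  finally show ?thesis .
qed

lemma dim_high_spin_sector_mono_chain:
  assumes even: "even CARD('n::finite)" and "a \<le> b"
    and small: "\<And>u. a < u \<Longrightarrow> u \<le> b \<Longrightarrow> \<bar>real CARD('n) / 2 - real u\<bar> \<le> J"
  shows "dim (high_spin_sector J b :: 'n qstate set) \<le> dim (high_spin_sector J a :: 'n qstate set)"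
  using assms(2,3)
proof (induction b rule: dec_induct)
  case (step u)
  have "dim (high_spin_sector J (Suc u) :: 'n qstate set) \<le> dim (high_spin_sector J u :: 'n qstate set)"
    using step.hyps by (intro dim_high_spin_sector_Suc_le[OF even] step.prems) auto
  also have "\<dots> \<le> dim (high_spin_sector J a :: 'n qstate set)"
    using step.hyps step.prems by (intro step.IH) auto
  finally show ?case .
qed simp

lemma dim_high_spin_sector_0:
  assumes even: "even CARD('n::finite)" and small: "real CARD('n) / 2 \<le> J"
  shows "dim (high_spin_sector J 0 :: 'n qstate set) = 0"
proof -
  have "high_spin_sector J 0 \<subseteq> (span {} :: 'n qstate set)"
    using high_spin_sector_highest_weight_eq_0[OF even _ _, of _ J 0] small
    by (auto simp: high_spin_sector_def spin_raise_excitation_space_0)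
  from dim_le_card[OF this] show ?thesis by simp
qed

definition strings_with_popcount :: "nat \<Rightarrow> ('n::finite \<Rightarrow> bool) set" where
  "strings_with_popcount t = {a. popcount a = t}"

text \<open>A real basis of \<open>excitation_space t\<close>: the basis strings and their multiples by \<open>\<i>\<close>.\<close>

definition excitation_basis :: "nat \<Rightarrow> 'n::finite qstate set" where
  "excitation_basis t = (\<lambda>a. axis a 1) ` strings_with_popcount t \<union> (\<lambda>a. axis a \<i>) ` strings_with_popcount t"

lemma card_strings_with_popcount: "card (strings_with_popcount t :: ('n::finite \<Rightarrow> bool) set) = CARD('n) choose t"
proof -
  have "bij_betw (\<lambda>a. {k. a k}) (strings_with_popcount t) {B. B \<subseteq> (UNIV :: 'n set) \<and> card B = t}"
    by (rule bij_betw_byWitness[where f'="\<lambda>B k. k \<in> B"]) (auto simp: strings_with_popcount_def popcount_def)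
  then have "card (strings_with_popcount t :: ('n \<Rightarrow> bool) set) = card {B. B \<subseteq> (UNIV :: 'n set) \<and> card B = t}"
    by (rule bij_betw_same_card)
  also have "\<dots> = CARD('n) choose t" by (rule n_subsets) simp
  finally show ?thesis .
qed

lemma excitation_basis_subset_Basis: "excitation_basis t \<subseteq> (Basis :: 'n::finite qstate set)"
  unfolding excitation_basis_def Basis_vec_def Basis_complex_def by auto

lemma span_excitation_basis: "span (excitation_basis t) = (excitation_space t :: 'n::finite qstate set)"
proof (rule equalityI)
  show "span (excitation_basis t) \<subseteq> (excitation_space t :: 'n qstate set)"
    by (rule span_minimal[OF _ subspace_excitation_space])
       (auto simp: excitation_basis_def excitation_space_def strings_with_popcount_def axis_def)
  show "excitation_space t \<subseteq> span (excitation_basis t :: 'n qstate set)"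
  proof
    fix v :: "'n qstate" assume v: "v \<in> excitation_space t"
    have "v = (\<Sum>a\<in>strings_with_popcount t. axis a (v $ a))"
      using v by (auto simp: vec_eq_iff sum_component axis_def excitation_space_def strings_with_popcount_def)
    also have "\<dots> = (\<Sum>a\<in>strings_with_popcount t. Re (v $ a) *\<^sub>R axis a 1 + Im (v $ a) *\<^sub>R axis a \<i>)"
      by (intro sum.cong refl) (simp add: vec_eq_iff axis_def complex_eq_iff)
    also have "\<dots> \<in> span (excitation_basis t)"
      by (intro span_sum span_add span_scale span_base) (auto simp: excitation_basis_def)
    finally show "v \<in> span (excitation_basis t)" .
  qed
qed

lemma dim_high_spin_sector_le_binomial:
  "dim (high_spin_sector J t :: 'n::finite qstate set) \<le> 2 * (CARD('n) choose t)"
proof -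
  have "high_spin_sector J t \<subseteq> span (excitation_basis t :: 'n qstate set)"
    by (auto simp: high_spin_sector_def span_excitation_basis)
  then have "dim (high_spin_sector J t :: 'n qstate set) \<le> card (excitation_basis t :: 'n qstate set)"
    by (rule dim_le_card) (simp add: finite_subset[OF excitation_basis_subset_Basis])
  also have "\<dots> \<le> card (strings_with_popcount t :: ('n \<Rightarrow> bool) set) + card (strings_with_popcount t :: ('n \<Rightarrow> bool) set)"
    unfolding excitation_basis_def by (rule order_trans[OF card_Un_le add_mono]) (auto intro: card_image_le)
  finally show ?thesis by (simp add: card_strings_with_popcount)
qed

lemma sum_diag_complement_proj_J_eq_dim:
  "2 * (\<Sum>a\<in>strings_with_popcount t. Re ((mat 1 - proj_J J :: 'n::finite qop) $ a $ a))
     = real (dim (high_spin_sector J t :: 'n qstate set))"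
proof -
  let ?Q = "mat 1 - proj_J J :: 'n qop" and ?A = "strings_with_popcount t :: ('n \<Rightarrow> bool) set"
  let ?q = "\<lambda>v::'n qstate. ?Q *v v"
  have q: "?q v = v - proj_J J *v v" for v by (simp add: matrix_vector_mult_diff_rdistrib)
  have self_adjoint: "inner (?q x) y = inner x (?q y)" for x y
    unfolding q inner_eq_Re_cinner cinner_diff_left cinner_diff_right cinner_proj_J ..
  have idem: "?q (?q x) = ?q x" for x
    unfolding q by (simp add: matrix_vector_mult_diff_distrib proj_J_idem)
  have image: "?q ` span (excitation_basis t) = high_spin_sector J t"
  proof
    show "?q ` span (excitation_basis t) \<subseteq> high_spin_sector J t"
      unfolding span_excitation_basis high_spin_sector_def
      by (auto simp: q excitation_space_proj_J_complement matrix_vector_mult_diff_distrib proj_J_idem)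
    show "high_spin_sector J t \<subseteq> ?q ` span (excitation_basis t)"
    proof
      fix v :: "'n qstate" assume "v \<in> high_spin_sector J t"
      then have "v = ?q v" "v \<in> span (excitation_basis t)"
        by (auto simp: q high_spin_sector_def span_excitation_basis)
      then show "v \<in> ?q ` span (excitation_basis t)" by blast
    qed
  qed
  have "(\<Sum>b\<in>excitation_basis t. inner b (?q b)) = real (dim (high_spin_sector J t :: 'n qstate set))"
    using sum_Basis_inner_proj_eq_dim[OF excitation_basis_subset_Basis matrix_vector_mul_linear
        self_adjoint idem] image
    by (simp add: span_excitation_basis high_spin_sector_def)
  moreover have "inner (axis a c) (?q (axis a c)) = Re (cnj c * c * ?Q $ a $ a)" for a c
    by (simp add: inner_eq_Re_cinner cinner_axis matrix_vector_mult_axis mult_ac)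
  then have "(\<Sum>b\<in>excitation_basis t. inner b (?q b)) = 2 * (\<Sum>a\<in>?A. Re (?Q $ a $ a))"
    unfolding excitation_basis_def
    by (subst sum.union_disjoint; simp add: sum.reindex inj_on_def axis_eq_axis; auto simp: axis_eq_axis)
  ultimately show ?thesis by simp
qed

lemma Re_mtrace_complement_proj_J_eq_sum_dim:
  "2 * Re (mtrace (mat 1 - proj_J J :: 'n::finite qop))
     = (\<Sum>t\<le>CARD('n). real (dim (high_spin_sector J t :: 'n qstate set)))"
proof -
  let ?f = "\<lambda>a. Re ((mat 1 - (proj_J J :: 'n qop)) $ a $ a)"
  have "2 * Re (mtrace (mat 1 - proj_J J :: 'n qop)) = 2 * (\<Sum>a\<in>UNIV. ?f a)"
    by (simp add: mtrace_def Re_sum)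
  also have "(\<Sum>a\<in>UNIV. ?f a) = (\<Sum>t\<le>CARD('n). \<Sum>a\<in>{a\<in>UNIV. popcount a = t}. ?f a)"
    by (rule sum.group[symmetric]) (auto simp: popcount_le)
  also have "2 * \<dots> = (\<Sum>t\<le>CARD('n). 2 * (\<Sum>a\<in>strings_with_popcount t. ?f a))"
    by (simp add: strings_with_popcount_def sum_distrib_left)
  also have "\<dots> = (\<Sum>t\<le>CARD('n). real (dim (high_spin_sector J t :: 'n qstate set)))"
    by (simp only: sum_diag_complement_proj_J_eq_dim)
  finally show ?thesis .
qed

section \<open>Dimension of the part orthogonal to the low-spin subspace\<close>

lemma pmf_binomial_half: "t \<le> K \<Longrightarrow> pmf (binomial_pmf K (1/2)) t = real (K choose t) / 2 ^ K"
  by (simp add: pmf_binomial power_add[symmetric] power_one_over)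

lemma sum_binomial_eq_prob_binomial_half:
  assumes "A \<subseteq> {..K}"
  shows "(\<Sum>t\<in>A. real (K choose t)) / 2 ^ K = measure_pmf.prob (binomial_pmf K (1/2)) A"
proof -
  have "finite A" using assms finite_subset by blast
  then have "measure_pmf.prob (binomial_pmf K (1/2)) A = (\<Sum>t\<in>A. pmf (binomial_pmf K (1/2)) t)"
    by (rule measure_measure_pmf_finite)
  also have "\<dots> = (\<Sum>t\<in>A. real (K choose t)) / 2 ^ K"
    unfolding sum_divide_distrib using assms by (intro sum.cong refl pmf_binomial_half) auto
  finally show ?thesis ..
qed

lemma binomial_le_exp:
  assumes "K > 0" and "s \<ge> 0" and "real t \<le> real K / 2 - s"
  shows "real (K choose t) \<le> 2 ^ K * exp (-2 * s\<^sup>2 / K)"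
proof -
  interpret binomial_distribution K "1/2" by unfold_locales auto
  have "t \<le> K" using assms(2,3) by linarith
  then have "real (K choose t) / 2 ^ K = measure_pmf.prob (binomial_pmf K (1/2)) {t}"
    using sum_binomial_eq_prob_binomial_half[of "{t}" K] by simp
  also have "\<dots> \<le> measure_pmf.prob (binomial_pmf K (1/2)) {x. real x \<le> real K * (1/2) - s}"
    using assms(3) by (intro measure_pmf.finite_measure_mono) auto
  also have "\<dots> \<le> exp (-2 * s\<^sup>2 / K)"
    by (rule prob_le[OF assms(1,2)])
  finally show ?thesis by (simp add: field_simps)
qed

lemma sum_binomial_tails_le:
  assumes "K > 0" and "s \<ge> 0"
  shows "(\<Sum>t\<in>{t. t \<le> K \<and> s \<le> \<bar>real t - real K / 2\<bar>}. real (K choose t)) \<le> 2 * 2 ^ K * exp (-2 * s\<^sup>2 / K)"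
proof -
  interpret binomial_distribution K "1/2" by unfold_locales auto
  let ?P = "measure_pmf.prob (binomial_pmf K (1/2))"
  let ?U = "{x. real x \<ge> real K * (1/2) + s}" and ?L = "{x. real x \<le> real K * (1/2) - s}"
  have "(\<Sum>t\<in>{t. t \<le> K \<and> s \<le> \<bar>real t - real K / 2\<bar>}. real (K choose t)) / 2 ^ K
      = ?P {t. t \<le> K \<and> s \<le> \<bar>real t - real K / 2\<bar>}"
    by (rule sum_binomial_eq_prob_binomial_half) auto
  also have "\<dots> \<le> ?P (?U \<union> ?L)"
    by (intro measure_pmf.finite_measure_mono) auto
  also have "\<dots> \<le> ?P ?U + ?P ?L"
    by (rule measure_Un_le) auto
  also have "\<dots> \<le> exp (-2 * s\<^sup>2 / K) + exp (-2 * s\<^sup>2 / K)"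
    by (intro add_mono prob_ge[OF assms] prob_le[OF assms])
  finally show ?thesis by (simp add: field_simps)
qed

lemma dim_high_spin_sector_window:
  assumes even: "even CARD('n::finite)" and K: "CARD('n) = 2 * h" and g: "real g \<le> J" "g < h"
    and t: "h - g \<le> t" "t \<le> h + g"
  shows "dim (high_spin_sector J t :: 'n qstate set) \<le> 2 * (CARD('n) choose (h - g - 1))"
proof -
  have "dim (high_spin_sector J t :: 'n qstate set) \<le> dim (high_spin_sector J (h - g - 1) :: 'n qstate set)"
  proof (rule dim_high_spin_sector_mono_chain[OF even])
    fix u assume "h - g - 1 < u" "u \<le> t"
    then have "\<bar>real h - real u\<bar> \<le> real g" using t g(2) by linarith
    then show "\<bar>real CARD('n) / 2 - real u\<bar> \<le> J" using g(1) K by simp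
  qed (use t in simp)
  also have "\<dots> \<le> 2 * (CARD('n) choose (h - g - 1))"
    by (rule dim_high_spin_sector_le_binomial)
  finally show ?thesis .
qed

lemma dim_high_spin_sector_eq_0:
  assumes even: "even CARD('n::finite)" and small: "real CARD('n) / 2 \<le> J" and t: "t \<le> CARD('n)"
  shows "dim (high_spin_sector J t :: 'n qstate set) = 0"
proof -
  have "dim (high_spin_sector J t :: 'n qstate set) \<le> dim (high_spin_sector J 0 :: 'n qstate set)"
  proof (rule dim_high_spin_sector_mono_chain[OF even])
    fix u assume "0 < u" "u \<le> t"
    then show "\<bar>real CARD('n) / 2 - real u\<bar> \<le> J" using small t by linarith
  qed simp
  then show ?thesis using dim_high_spin_sector_0[OF even small] by simp
qed

lemma sum_dim_high_spin_sector_le_tails: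
  assumes even: "even CARD('n::finite)" and K: "CARD('n) = 2 * h" and g: "real g \<le> J" "g < h"
  shows "(\<Sum>t\<le>CARD('n). real (dim (high_spin_sector J t :: 'n qstate set)))
     \<le> 2 * (2 * real g + 1) * real (CARD('n) choose (h - g - 1))
       + 2 * (\<Sum>t\<in>{t. t \<le> CARD('n) \<and> real g + 1 \<le> \<bar>real t - real CARD('n) / 2\<bar>}. real (CARD('n) choose t))"
proof -
  let ?d = "\<lambda>t. real (dim (high_spin_sector J t :: 'n qstate set))"
  let ?W = "{h - g..h + g}" and ?R = "{t. t \<le> CARD('n) \<and> real g + 1 \<le> \<bar>real t - real CARD('n) / 2\<bar>}"
  have split: "{..CARD('n)} = ?W \<union> ?R" and "?W \<inter> ?R = {}"
    using g(2) unfolding K by (auto simp: abs_if)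
  then have "(\<Sum>t\<le>CARD('n). ?d t) = (\<Sum>t\<in>?W. ?d t) + (\<Sum>t\<in>?R. ?d t)"
    by (subst split) (rule sum.union_disjoint, auto)
  also have "(\<Sum>t\<in>?W. ?d t) \<le> (\<Sum>t\<in>?W. 2 * real (CARD('n) choose (h - g - 1)))"
    by (intro sum_mono) (metis atLeastAtMost_iff dim_high_spin_sector_window[OF even K g]
        of_nat_le_iff of_nat_mult of_nat_numeral)
  also have "\<dots> = 2 * (2 * real g + 1) * real (CARD('n) choose (h - g - 1))"
    using g(2) by simp
  also have "(\<Sum>t\<in>?R. ?d t) \<le> (\<Sum>t\<in>?R. 2 * real (CARD('n) choose t))"
    by (intro sum_mono) (metis dim_high_spin_sector_le_binomial of_nat_le_iff of_nat_mult of_nat_numeral)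
  finally show ?thesis by (simp add: sum_distrib_left algebra_simps)
qed

text \<open>With \<open>g = \<lfloor>J\<rfloor> < K/2\<close>, the \<open>2g+1\<close> central sectors and the two tails beyond distance
  \<open>g+1\<close> from \<open>K/2\<close> cost \<open>2(2g+3) \<le> 2(K+1)\<close> times \<open>2\<^sup>K exp(-2(g+1)\<^sup>2/K)\<close>.\<close>

lemma sum_dim_high_spin_sector_lt:
  assumes even: "even CARD('n::finite)" and J: "J \<ge> 0"
  shows "(\<Sum>t\<le>CARD('n). real (dim (high_spin_sector J t :: 'n qstate set))) / 2 ^ CARD('n)
     < 2 * (real CARD('n) + 1) * exp (- 2 * J\<^sup>2 / real CARD('n))"
proof -
  let ?K = "CARD('n)" and ?E = "exp (- 2 * J\<^sup>2 / real CARD('n))"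
  obtain h where K: "?K = 2 * h" using even by (metis evenE)
  define g where "g = nat \<lfloor>J\<rfloor>"
  have g: "real g \<le> J" "J < real g + 1" using J unfolding g_def by linarith+
  show ?thesis
  proof (cases "g < h")
    case False
    then have small: "real ?K / 2 \<le> J" using g K by simp
    have "(\<Sum>t\<le>?K. real (dim (high_spin_sector J t :: 'n qstate set))) = 0"
      by (intro sum.neutral ballI) (simp add: dim_high_spin_sector_eq_0[OF even small])
    then show ?thesis by simp
  next
    case True
    define e where "e = exp (-2 * (real g + 1)\<^sup>2 / ?K)"
    have mid: "real (?K choose (h - g - 1)) \<le> 2 ^ ?K * e"
      unfolding e_def by (rule binomial_le_exp) (use True K in auto)
    have "(\<Sum>t\<le>?K. real (dim (high_spin_sector J t :: 'n qstate set)))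
        \<le> 2 * (2 * real g + 1) * real (?K choose (h - g - 1))
          + 2 * (\<Sum>t\<in>{t. t \<le> ?K \<and> real g + 1 \<le> \<bar>real t - real ?K / 2\<bar>}. real (?K choose t))"
      by (rule sum_dim_high_spin_sector_le_tails[OF even K g(1) True])
    also have "\<dots> \<le> 2 * (2 * real g + 1) * (2 ^ ?K * e) + 2 * (2 * 2 ^ ?K * e)"
      unfolding e_def using mid[unfolded e_def]
      by (intro add_mono mult_left_mono sum_binomial_tails_le) auto
    also have "\<dots> = 2 ^ ?K * (2 * (2 * real g + 3) * e)" by (simp add: algebra_simps)
    also have "\<dots> < 2 ^ ?K * (2 * (real ?K + 1) * ?E)"
    proof -
      have "2 * real g + 3 \<le> real ?K + 1" using True K by simp
      moreover have "J\<^sup>2 < (real g + 1)\<^sup>2" using g J by (intro power_strict_mono) auto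
      then have "e < ?E" unfolding e_def by (intro exp_less_mono divide_strict_right_mono) auto
      ultimately show ?thesis
        by (intro mult_strict_left_mono mult_le_less_imp_less) (auto simp: e_def)
    qed
    finally show ?thesis by (simp add: field_simps)
  qed
qed

section \<open>Second moments of a unitarily invariant random state\<close>

definition reflection_mat :: "'i \<Rightarrow> complex ^ 'i ^ 'i" where
  "reflection_mat c = (\<chi> a b. if b = a then (if a = c then -1 else 1) else 0)"

definition permutation_mat :: "('i \<Rightarrow> 'i) \<Rightarrow> complex ^ 'i ^ 'i" where
  "permutation_mat p = (\<chi> a b. if b = p a then 1 else 0)"

lemma reflection_mat_apply: "(reflection_mat c *v v) $ a = (if a = c then - v $ a else v $ a)"
  unfolding reflection_mat_def matrix_vector_mult_def by (simp only: vec_lambda_beta sum_delta_mult) simp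

lemma permutation_mat_apply: "(permutation_mat p *v v) $ a = v $ p a"
  unfolding permutation_mat_def matrix_vector_mult_def by (simp only: vec_lambda_beta sum_delta_mult) simp

lemma unitary_mat_iff_columns:
  "unitary_mat U \<longleftrightarrow> (\<forall>a b. (\<Sum>x\<in>UNIV. cnj (U $ x $ a) * U $ x $ b) = (if a = b then 1 else 0))"
  unfolding unitary_mat_def by (simp add: vec_eq_iff matrix_matrix_mult_def adjoint_mat_def mat_def)

lemma unitary_reflection_mat: "unitary_mat (reflection_mat (c :: 'i::finite))"
  unfolding unitary_mat_iff_columns
proof (intro allI)
  fix a b :: 'i
  have "(\<Sum>x\<in>UNIV. cnj (reflection_mat c $ x $ a) * reflection_mat c $ x $ b)
      = (\<Sum>x\<in>UNIV. if x = a then (if a = b then 1 else 0) else 0)"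
    by (intro sum.cong refl) (auto simp: reflection_mat_def)
  then show "(\<Sum>x\<in>UNIV. cnj (reflection_mat c $ x $ a) * reflection_mat c $ x $ b) = (if a = b then 1 else 0)"
    by simp
qed

lemma unitary_permutation_mat:
  assumes "bij (p :: 'i::finite \<Rightarrow> 'i)"
  shows "unitary_mat (permutation_mat p)"
  unfolding unitary_mat_iff_columns
proof (intro allI)
  fix a b :: 'i
  have "(\<Sum>x\<in>UNIV. cnj (permutation_mat p $ x $ a) * permutation_mat p $ x $ b)
      = (\<Sum>x\<in>UNIV. if x = inv p a then (if a = b then 1 else 0) else 0)"
    using assms by (intro sum.cong refl) (auto simp: permutation_mat_def bij_inv_eq_iff)
  then show "(\<Sum>x\<in>UNIV. cnj (permutation_mat p $ x $ a) * permutation_mat p $ x $ b) = (if a = b then 1 else 0)"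
    by simp
qed

context
  fixes M :: "(complex ^ 'i::finite) measure"
  assumes M: "unitarily_invariant_pure_state_measure M"
begin

lemma prob_space_invariant_measure: "prob_space M"
  using M unfolding unitarily_invariant_pure_state_measure_def by blast

lemma sets_invariant_measure: "sets M = sets borel"
  using M unfolding unitarily_invariant_pure_state_measure_def by blast

lemma continuous_borel_measurable_invariant_measure:
  "continuous_on UNIV f \<Longrightarrow> f \<in> borel_measurable M"
  using measurable_cong_sets[OF sets_invariant_measure refl] borel_measurable_continuous_onI by blast

lemma AE_invariant_measure_norm: "AE v in M. norm v = 1"
proof -
  have "measure M (sphere 0 1) = 1"
    using M unfolding unitarily_invariant_pure_state_measure_def by (simp add: measure_def)
  then have "AE v in M. v \<in> sphere 0 1" by (rule prob_space.AE_prob_1[OF prob_space_invariant_measure])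
  then show ?thesis by (rule AE_mp) (auto simp: dist_norm)
qed

lemma integrable_invariant_measure:
  fixes f :: "complex ^ 'i \<Rightarrow> 'b::{banach, second_countable_topology}"
  assumes "continuous_on UNIV f" and "\<And>v. norm v = 1 \<Longrightarrow> norm (f v) \<le> 1"
  shows "integrable M f"
proof (rule Bochner_Integration.integrable_bound)
  show "integrable M (\<lambda>v. 1::real)"
    using prob_space_invariant_measure by (simp add: prob_space_def finite_measure.integrable_const)
  show "f \<in> borel_measurable M" by (rule continuous_borel_measurable_invariant_measure[OF assms(1)])
  show "AE x in M. norm (f x) \<le> norm (1::real)"
    using AE_invariant_measure_norm by (rule AE_mp) (auto intro: assms(2))
qed

lemma integral_invariant_measure_unitary:
  fixes f :: "complex ^ 'i \<Rightarrow> 'b::{banach, second_countable_topology}"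
  assumes U: "unitary_mat U" and f: "continuous_on UNIV f"
  shows "integral\<^sup>L M f = integral\<^sup>L M (\<lambda>v. f (U *v v))"
proof -
  have "distr M borel (\<lambda>v. U *v v) = M"
    using M U unfolding unitarily_invariant_pure_state_measure_def by blast
  moreover have "(\<lambda>v. U *v v) \<in> M \<rightarrow>\<^sub>M borel"
    by (rule continuous_borel_measurable_invariant_measure) (intro continuous_intros)
  ultimately show ?thesis
    using integral_distr[OF _ borel_measurable_continuous_onI[OF f]] by metis
qed

lemma integrable_cnj_mult_components: "integrable M (\<lambda>v. cnj (v $ a) * v $ b)"
proof (rule integrable_invariant_measure)
  show "continuous_on UNIV (\<lambda>v::complex ^ 'i. cnj (v $ a) * v $ b)" by (intro continuous_intros)
  fix v :: "complex ^ 'i" assume "norm v = 1"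
  moreover have "norm (v $ a) * norm (v $ b) \<le> norm v * norm v"
    by (intro mult_mono Finite_Cartesian_Product.norm_nth_le) auto
  ultimately show "norm (cnj (v $ a) * v $ b) \<le> 1" by (simp add: norm_mult)
qed

lemma integral_cnj_mult_components_off_diagonal:
  assumes "a \<noteq> b"
  shows "integral\<^sup>L M (\<lambda>v. cnj (v $ a) * v $ b) = 0"
proof -
  have "integral\<^sup>L M (\<lambda>v. cnj (v $ a) * v $ b)
      = integral\<^sup>L M (\<lambda>v. cnj ((reflection_mat a *v v) $ a) * (reflection_mat a *v v) $ b)"
    by (rule integral_invariant_measure_unitary[OF unitary_reflection_mat]) (intro continuous_intros)
  also have "\<dots> = - integral\<^sup>L M (\<lambda>v. cnj (v $ a) * v $ b)"
    using assms by (simp add: reflection_mat_apply)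
  finally show ?thesis by simp
qed

lemma integral_cnj_mult_components_diagonal:
  "integral\<^sup>L M (\<lambda>v. cnj (v $ a) * v $ a) = 1 / of_nat CARD('i)"
proof -
  have same: "integral\<^sup>L M (\<lambda>v. cnj (v $ b) * v $ b) = integral\<^sup>L M (\<lambda>v. cnj (v $ a) * v $ a)" for b
  proof -
    have "integral\<^sup>L M (\<lambda>v. cnj (v $ b) * v $ b)
        = integral\<^sup>L M (\<lambda>v. cnj ((permutation_mat (Transposition.transpose a b) *v v) $ b) * (permutation_mat (Transposition.transpose a b) *v v) $ b)"
      by (rule integral_invariant_measure_unitary[OF unitary_permutation_mat[OF bij_transpose]])
         (intro continuous_intros)
    then show ?thesis by (simp add: permutation_mat_apply)
  qed
  have "AE v in M. (\<Sum>b\<in>UNIV. cnj (v $ b) * v $ b) = 1"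
    using AE_invariant_measure_norm
    by (rule AE_mp) (simp add: cinner_def[symmetric] cinner_self_norm)
  then have "(\<Sum>b\<in>UNIV. integral\<^sup>L M (\<lambda>v. cnj (v $ b) * v $ b)) = integral\<^sup>L M (\<lambda>v. 1)"
    by (subst Bochner_Integration.integral_sum[symmetric, OF integrable_cnj_mult_components])
       (intro integral_cong_AE; simp add: continuous_borel_measurable_invariant_measure continuous_intros)
  also have "\<dots> = 1" using prob_space.prob_space[OF prob_space_invariant_measure] by simp
  moreover have "(\<Sum>b\<in>UNIV. integral\<^sup>L M (\<lambda>v. cnj (v $ b) * v $ b))
      = of_nat CARD('i) * integral\<^sup>L M (\<lambda>v. cnj (v $ a) * v $ a)"
    using sum.cong[OF refl same] by simp
  ultimately show ?thesis by (simp add: field_simps)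
qed

lemma integrable_cinner_quadratic_form: "integrable M (\<lambda>v. cinner v (A *v v))"
  unfolding cinner_quadratic_form
  by (intro Bochner_Integration.integrable_sum integrable_mult_right integrable_cnj_mult_components)

lemma integral_cinner_quadratic_form: "integral\<^sup>L M (\<lambda>v. cinner v (A *v v)) = mtrace A / of_nat CARD('i)"
proof -
  have "integral\<^sup>L M (\<lambda>v. cinner v (A *v v))
      = (\<Sum>a\<in>UNIV. \<Sum>b\<in>UNIV. A $ a $ b * integral\<^sup>L M (\<lambda>v. cnj (v $ a) * v $ b))"
    unfolding cinner_quadratic_form
    by (simp add: Bochner_Integration.integral_sum Bochner_Integration.integrable_sum
        integrable_cnj_mult_components)
  also have "\<dots> = (\<Sum>a\<in>UNIV. A $ a $ a / of_nat CARD('i))"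
  proof (rule sum.cong[OF refl])
    fix a
    have "(\<Sum>b\<in>UNIV. A $ a $ b * integral\<^sup>L M (\<lambda>v. cnj (v $ a) * v $ b))
        = (\<Sum>b\<in>UNIV. if b = a then A $ a $ a / of_nat CARD('i) else 0)"
      by (intro sum.cong refl)
         (auto simp: integral_cnj_mult_components_off_diagonal integral_cnj_mult_components_diagonal)
    then show "(\<Sum>b\<in>UNIV. A $ a $ b * integral\<^sup>L M (\<lambda>v. cnj (v $ a) * v $ b)) = A $ a $ a / of_nat CARD('i)"
      by simp
  qed
  also have "\<dots> = mtrace A / of_nat CARD('i)" by (simp add: mtrace_def sum_divide_distrib)
  finally show ?thesis .
qed

end

section \<open>Fidelity of the encoding\<close>

lemma cinner_proj_J_self: "cinner \<psi> (proj_J J *v \<psi>) = complex_of_real ((norm (proj_J J *v \<psi>))\<^sup>2)"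
proof -
  have "cinner \<psi> (proj_J J *v \<psi>) = cinner \<psi> (proj_J J *v (proj_J J *v \<psi>))" by (simp only: proj_J_idem)
  also have "\<dots> = cinner (proj_J J *v \<psi>) (proj_J J *v \<psi>)" by (rule cinner_proj_J[symmetric])
  finally show ?thesis by (simp only: cinner_self_norm)
qed

lemma cinner_complement_proj_J_self:
  "cinner \<psi> ((mat 1 - proj_J J) *v \<psi>) = complex_of_real ((norm \<psi>)\<^sup>2 - (norm (proj_J J *v \<psi>))\<^sup>2)"
  by (simp add: matrix_vector_mult_diff_rdistrib cinner_diff_right cinner_self_norm cinner_proj_J_self)

lemma norm_proj_J_le: "norm (proj_J J *v \<psi>) \<le> norm \<psi>"
proof -
  let ?q = "\<psi> - proj_J J *v \<psi>"
  have "cinner ?q ?q = cinner \<psi> \<psi> - cinner \<psi> (proj_J J *v \<psi>)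
      - (cinner (proj_J J *v \<psi>) \<psi> - cinner (proj_J J *v \<psi>) (proj_J J *v \<psi>))"
    by (simp add: cinner_diff_left cinner_diff_right)
  also have "cinner (proj_J J *v \<psi>) \<psi> - cinner (proj_J J *v \<psi>) (proj_J J *v \<psi>) = 0"
    by (simp add: cinner_proj_J proj_J_idem)
  finally have "complex_of_real ((norm ?q)\<^sup>2) = complex_of_real ((norm \<psi>)\<^sup>2 - (norm (proj_J J *v \<psi>))\<^sup>2)"
    by (simp only: cinner_self_norm cinner_proj_J_self of_real_diff diff_zero)
  then have "(norm ?q)\<^sup>2 = (norm \<psi>)\<^sup>2 - (norm (proj_J J *v \<psi>))\<^sup>2"
    by (simp only: of_real_eq_iff)
  then have "(norm (proj_J J *v \<psi>))\<^sup>2 \<le> (norm \<psi>)\<^sup>2"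
    using zero_le_power2[of "norm ?q"] by linarith
  then show ?thesis by (rule power2_le_imp_le) simp
qed

lemma fidelity_eq:
  fixes J :: real and \<psi> :: "'n::finite qstate"
  assumes "norm \<psi> = 1"
  defines "r \<equiv> (norm (proj_J J *v \<psi>))\<^sup>2"
  shows "fidelity J \<rho>0 \<psi> = r\<^sup>2 + (1 - r) * Re (cinner \<psi> (\<rho>0 *v \<psi>))"
proof -
  let ?x = "cinner \<psi> (proj_J J *v \<psi>)" and ?c = "cinner \<psi> (\<rho>0 *v \<psi>)"
  have trace: "mtrace ((mat 1 - proj_J J) ** outer \<psi>) = 1 - ?x"
    using assms by (simp add: mtrace_mult_outer matrix_vector_mult_diff_rdistrib cinner_diff_right cinner_self_norm)
  have "encoding_channel J \<rho>0 (outer \<psi>) *v \<psi> = ?x *s (proj_J J *v \<psi>) + (1 - ?x) *s (\<rho>0 *v \<psi>)"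
    unfolding encoding_channel_def trace[symmetric]
    by (simp add: matrix_vector_mult_add_rdistrib matrix_vector_mul_assoc[symmetric] smult_mat_vector_mult
        outer_vector_mult vector_scalar_commute)
  then have "fidelity J \<rho>0 \<psi> = Re (?x * ?x + (1 - ?x) * ?c)"
    unfolding fidelity_def by (simp only: cinner_add_right cinner_scale_right)
  also have "?x = complex_of_real r" unfolding r_def by (rule cinner_proj_J_self)
  finally show ?thesis by (simp add: power2_eq_square)
qed

lemma one_minus_fidelity_le:
  assumes "density_matrix \<rho>0" and "norm \<psi> = 1"
  shows "1 - fidelity J \<rho>0 \<psi> \<le> 2 * Re (cinner \<psi> ((mat 1 - proj_J J) *v \<psi>))"
proof -
  define r where "r = (norm (proj_J J *v \<psi>))\<^sup>2"
  have "0 \<le> r" "r \<le> 1"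
    using norm_proj_J_le[of J \<psi>] assms(2) unfolding r_def by (auto simp: power_le_one)
  moreover have "0 \<le> Re (cinner \<psi> (\<rho>0 *v \<psi>))" using assms(1) by (simp add: density_matrix_def)
  ultimately have "0 \<le> (1 - r) * Re (cinner \<psi> (\<rho>0 *v \<psi>))" by simp
  moreover have "Re (cinner \<psi> ((mat 1 - proj_J J) *v \<psi>)) = 1 - r"
    using assms(2) by (simp add: cinner_complement_proj_J_self r_def)
  moreover have "1 - r\<^sup>2 \<le> 2 * (1 - r)"
    using zero_le_power2[of "1 - r"] by (simp add: power2_eq_square algebra_simps)
  moreover have "fidelity J \<rho>0 \<psi> = r\<^sup>2 + (1 - r) * Re (cinner \<psi> (\<rho>0 *v \<psi>))"
    unfolding r_def by (rule fidelity_eq[OF assms(2)])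
  ultimately show ?thesis by (smt (verit))
qed

lemma prob_fidelity_less_le:
  fixes \<rho>0 :: "'n::finite qop" and M :: "'n qstate measure"
  assumes dens: "density_matrix \<rho>0" and M: "unitarily_invariant_pure_state_measure M" and \<epsilon>: "\<epsilon> > 0"
  shows "measure M {\<psi> \<in> space M. fidelity J \<rho>0 \<psi> < 1 - \<epsilon>}
           \<le> 2 * Re (mtrace (mat 1 - proj_J J :: 'n qop)) / real CARD('n \<Rightarrow> bool) / \<epsilon>"
proof -
  define g where "g \<psi> = 2 * Re (cinner \<psi> ((mat 1 - proj_J J) *v \<psi>))" for \<psi> :: "'n qstate"
  have g_measurable [measurable]: "g \<in> borel_measurable M"
    unfolding g_def cinner_def
    by (intro continuous_borel_measurable_invariant_measure[OF M] continuous_intros)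
  have g_integrable: "integrable M g"
    unfolding g_def by (intro integrable_mult_right integrable_Re integrable_cinner_quadratic_form[OF M])
  have "measure M {\<psi> \<in> space M. fidelity J \<rho>0 \<psi> < 1 - \<epsilon>} \<le> measure M {\<psi> \<in> space M. \<epsilon> \<le> g \<psi>}"
  proof (rule finite_measure.finite_measure_mono_AE)
    show "finite_measure M" using prob_space_invariant_measure[OF M] by (simp add: prob_space_def)
    show "AE \<psi> in M. \<psi> \<in> {\<psi> \<in> space M. fidelity J \<rho>0 \<psi> < 1 - \<epsilon>} \<longrightarrow> \<psi> \<in> {\<psi> \<in> space M. \<epsilon> \<le> g \<psi>}"
      using AE_invariant_measure_norm[OF M]
    proof (rule AE_mp, intro AE_I2 impI)
      fix \<psi> assume "norm \<psi> = 1" and "\<psi> \<in> {\<psi> \<in> space M. fidelity J \<rho>0 \<psi> < 1 - \<epsilon>}"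
      then show "\<psi> \<in> {\<psi> \<in> space M. \<epsilon> \<le> g \<psi>}"
        using one_minus_fidelity_le[OF dens, of \<psi> J] by (auto simp: g_def)
    qed
  qed measurable
  also have "\<dots> \<le> integral\<^sup>L M g / \<epsilon>"
    by (rule integral_Markov_inequality_measure[OF g_integrable sets.top _ \<epsilon>])
       (simp add: g_def cinner_complement_proj_J_self norm_proj_J_le)
  also have "integral\<^sup>L M g = 2 * Re (mtrace (mat 1 - proj_J J :: 'n qop)) / real CARD('n \<Rightarrow> bool)"
    using integral_Re[OF integrable_cinner_quadratic_form[OF M]] unfolding g_def
    by (simp add: integral_cinner_quadratic_form[OF M])
  finally show ?thesis .
qed

theorem theorem1:
  fixes J :: real and \<epsilon> :: real
    and \<rho>0 :: "'n::finite qop"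
    and M :: "'n qstate measure"
  assumes "even CARD('n)"
    and "J \<ge> 0"
    and "\<epsilon> > 0"
    and "density_matrix \<rho>0"
    and "range (\<lambda>v. \<rho>0 *v v) \<subseteq> low_spin_space J"
    and "unitarily_invariant_pure_state_measure M"
  shows "measure M {\<psi> \<in> space M. fidelity J \<rho>0 \<psi> < 1 - \<epsilon>}
           < 2 * (real CARD('n) + 1) / \<epsilon> * exp (- 2 * J\<^sup>2 / real CARD('n))"
proof -
  have "measure M {\<psi> \<in> space M. fidelity J \<rho>0 \<psi> < 1 - \<epsilon>}
      \<le> 2 * Re (mtrace (mat 1 - proj_J J :: 'n qop)) / real CARD('n \<Rightarrow> bool) / \<epsilon>"
    using prob_fidelity_less_le[OF assms(4,6,3)] .
  also have "\<dots> = (\<Sum>t\<le>CARD('n). real (dim (high_spin_sector J t :: 'n qstate set))) / 2 ^ CARD('n) / \<epsilon>"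
    by (simp add: Re_mtrace_complement_proj_J_eq_sum_dim card_fun)
  also have "\<dots> < 2 * (real CARD('n) + 1) * exp (- 2 * J\<^sup>2 / real CARD('n)) / \<epsilon>"
    by (intro divide_strict_right_mono sum_dim_high_spin_sector_lt assms(1,2,3))
  finally show ?thesis by simp
qed

end
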